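(* Let $\mathsf R\subseteq\{\mathsf e,\mathsf c\}$. Every member of $\mathsf{RLUG}_{\mathsf R}$ is a subalgebra of the $\{\wedge,\vee,\cdot,\backslash,/,1\}$-reduct of some member of $\mathsf{CyInRLUG}_{\mathsf R}$.
   Context: An $r\ell u$-groupoid is an algebra $(A,\wedge,\vee,\cdot,\backslash,/,1)$ with $(A,\wedge,\vee)$ a lattice (order $\le$), $(A,\cdot,1)$ a unital groupoid (binary operation, not necessarily associative, with two-sided unit $1$), and $x\cdot y\le z\iff y\le x\backslash z\iff x\le z/y$. An $r\ell uz$-groupoid is an $r\ell u$-groupoid with an additional arbitrary constant $0$; write ${\sim}x:=x\backslash 0$, $-x:=0/x$. It is involutive if ${\sim}(-x)=x=-({\sim}x)$ and $({\sim}x)/y=x\backslash(-y)$ for all $x,y$; cyclic involutive if moreover ${\sim}x=-x$. Equations: $(\mathsf e)$ $x\cdot y\le y\cdot x$; $(\mathsf c)$ $x\le x\cdot x$. $\mathsf{RLUG}_{\mathsf R}$ is the variety of $r\ell u$-groupoids satisfying $\mathsf R$; $\mathsf{CyInRLUG}_{\mathsf R}$ the variety of cyclic involutive $r\ell uz$-groupoids satisfying $\mathsf R$. The $\mathcal N$-reduct of an algebra forgets the operations outside $\mathcal N$. *)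

theory Defs
  imports Main
begin

text \<open>Algebras are represented by a carrier set together with total operations
  (only their behaviour on the carrier matters).\<close>

record 'a rlug =
  car  :: "'a set"
  mt   :: "'a \<Rightarrow> 'a \<Rightarrow> 'a"
  jn   :: "'a \<Rightarrow> 'a \<Rightarrow> 'a"
  ml   :: "'a \<Rightarrow> 'a \<Rightarrow> 'a"
  ld   :: "'a \<Rightarrow> 'a \<Rightarrow> 'a"
  rd   :: "'a \<Rightarrow> 'a \<Rightarrow> 'a"
  un   :: "'a"

record 'a rluzg = "'a rlug" +
  zr   :: "'a"

definition leq :: "('a, 'b) rlug_scheme \<Rightarrow> 'a \<Rightarrow> 'a \<Rightarrow> bool" where
  "leq A x y \<longleftrightarrow> mt A x y = x"

definition is_lattice :: "('a, 'b) rlug_scheme \<Rightarrow> bool" where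
  "is_lattice A \<longleftrightarrow>
     (\<forall>x\<in>car A. \<forall>y\<in>car A. mt A x y \<in> car A \<and> jn A x y \<in> car A) \<and>
     (\<forall>x\<in>car A. \<forall>y\<in>car A. mt A x y = mt A y x \<and> jn A x y = jn A y x) \<and>
     (\<forall>x\<in>car A. \<forall>y\<in>car A. \<forall>z\<in>car A.
        mt A x (mt A y z) = mt A (mt A x y) z \<and> jn A x (jn A y z) = jn A (jn A x y) z) \<and>
     (\<forall>x\<in>car A. \<forall>y\<in>car A. mt A x (jn A x y) = x \<and> jn A x (mt A x y) = x)"

definition is_rlug :: "('a, 'b) rlug_scheme \<Rightarrow> bool" where
  "is_rlug A \<longleftrightarrow>
     is_lattice A \<and>
     (\<forall>x\<in>car A. \<forall>y\<in>car A.
        ml A x y \<in> car A \<and> ld A x y \<in> car A \<and> rd A x y \<in> car A) \<and>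
     un A \<in> car A \<and>
     (\<forall>x\<in>car A. ml A (un A) x = x \<and> ml A x (un A) = x) \<and>
     (\<forall>x\<in>car A. \<forall>y\<in>car A. \<forall>z\<in>car A.
        (leq A (ml A x y) z \<longleftrightarrow> leq A y (ld A x z)) \<and>
        (leq A y (ld A x z) \<longleftrightarrow> leq A x (rd A z y)))"

definition is_rluzg :: "'a rluzg \<Rightarrow> bool" where
  "is_rluzg A \<longleftrightarrow> is_rlug A \<and> zr A \<in> car A"

definition lneg :: "'a rluzg \<Rightarrow> 'a \<Rightarrow> 'a" where
  "lneg A x = ld A x (zr A)"

definition rneg :: "'a rluzg \<Rightarrow> 'a \<Rightarrow> 'a" where
  "rneg A x = rd A (zr A) x"

definition is_involutive :: "'a rluzg \<Rightarrow> bool" where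
  "is_involutive A \<longleftrightarrow> is_rluzg A \<and>
     (\<forall>x\<in>car A. lneg A (rneg A x) = x \<and> rneg A (lneg A x) = x) \<and>
     (\<forall>x\<in>car A. \<forall>y\<in>car A. rd A (lneg A x) y = ld A x (rneg A y))"

definition is_cyclic_involutive :: "'a rluzg \<Rightarrow> bool" where
  "is_cyclic_involutive A \<longleftrightarrow> is_involutive A \<and>
     (\<forall>x\<in>car A. lneg A x = rneg A x)"

datatype eqn = Eq_e | Eq_c

definition satisfies :: "('a, 'b) rlug_scheme \<Rightarrow> eqn \<Rightarrow> bool" where
  "satisfies A r \<longleftrightarrow> (case r of
      Eq_e \<Rightarrow> (\<forall>x\<in>car A. \<forall>y\<in>car A. leq A (ml A x y) (ml A y x))
    | Eq_c \<Rightarrow> (\<forall>x\<in>car A. leq A x (ml A x x)))"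

definition in_RLUG :: "eqn set \<Rightarrow> ('a, 'b) rlug_scheme \<Rightarrow> bool" where
  "in_RLUG R A \<longleftrightarrow> is_rlug A \<and> (\<forall>r\<in>R. satisfies A r)"

definition in_CyInRLUG :: "eqn set \<Rightarrow> 'a rluzg \<Rightarrow> bool" where
  "in_CyInRLUG R A \<longleftrightarrow> is_cyclic_involutive A \<and> (\<forall>r\<in>R. satisfies A r)"

text \<open>A is (isomorphic to) a subalgebra of the {meet,join,mult,ldiv,rdiv,1}-reduct of B:
  there is an injective map of the carriers preserving these operations.\<close>
definition embeds_into_reduct :: "'a rlug \<Rightarrow> 'c rluzg \<Rightarrow> bool" where
  "embeds_into_reduct A B \<longleftrightarrow> (\<exists>h.
     inj_on h (car A) \<and> h ` car A \<subseteq> car B \<and>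
     h (un A) = un B \<and>
     (\<forall>x\<in>car A. \<forall>y\<in>car A.
        h (mt A x y) = mt B (h x) (h y) \<and> h (jn A x y) = jn B (h x) (h y) \<and>
        h (ml A x y) = ml B (h x) (h y) \<and> h (ld A x y) = ld B (h x) (h y) \<and>
        h (rd A x y) = rd B (h x) (h y)))"

end

theory Submission
  imports Defs
begin

text \<open>Stack A, a new element m, and an order-reversed copy of A, and add a bottom and a top:
  \<open>\<bottom> < A < m < A\<^sup>\<partial> < \<top>\<close>. Writing \<open>\<not>a\<close> for the copy of \<open>a\<close>, the map \<open>a \<mapsto> \<not>a\<close>
  (extended by \<open>\<bottom> \<leftrightarrow> \<top>\<close>, \<open>m \<mapsto> m\<close>) is an order-reversing involution. Products with a negated
  factor are forced by residuation, \<open>a \<cdot> \<not>d = \<not>(d/a)\<close> and \<open>\<not>b \<cdot> c = \<not>(c\<setminus>b)\<close>, and the divisions are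
  defined by duality, \<open>x\<setminus>z = \<not>(\<not>z \<cdot> x)\<close> and \<open>z/y = \<not>(y \<cdot> \<not>z)\<close>. Residuation of the
  extension then reduces to the rotation law \<open>x \<cdot> y \<le> \<not>w \<longleftrightarrow> w \<cdot> x \<le> \<not>y\<close>, which is a case
  check using the residuation of A. So the extension is a cyclic involutive \<open>r\<ell>uz\<close>-groupoid with
  \<open>0 = \<not>1\<close>, containing A as a subalgebra; it inherits (e) because commutativity of A forces
  \<open>a\<setminus>d = d/a\<close>, and (c) directly.\<close>

locale rlug =
  fixes A :: "('a, 'b) rlug_scheme"
  assumes rlug: "is_rlug A"
begin

lemma lattice: "is_lattice A"
  using rlug unfolding is_rlug_def by blast

lemma mt_closed [simp]: "x \<in> car A \<Longrightarrow> y \<in> car A \<Longrightarrow> mt A x y \<in> car A"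
  and jn_closed [simp]: "x \<in> car A \<Longrightarrow> y \<in> car A \<Longrightarrow> jn A x y \<in> car A"
  and mt_commute: "x \<in> car A \<Longrightarrow> y \<in> car A \<Longrightarrow> mt A x y = mt A y x"
  and jn_commute: "x \<in> car A \<Longrightarrow> y \<in> car A \<Longrightarrow> jn A x y = jn A y x"
  and mt_assoc: "x \<in> car A \<Longrightarrow> y \<in> car A \<Longrightarrow> z \<in> car A \<Longrightarrow> mt A x (mt A y z) = mt A (mt A x y) z"
  and jn_assoc: "x \<in> car A \<Longrightarrow> y \<in> car A \<Longrightarrow> z \<in> car A \<Longrightarrow> jn A x (jn A y z) = jn A (jn A x y) z"
  and mt_jn_absorb: "x \<in> car A \<Longrightarrow> y \<in> car A \<Longrightarrow> mt A x (jn A x y) = x"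
  and jn_mt_absorb: "x \<in> car A \<Longrightarrow> y \<in> car A \<Longrightarrow> jn A x (mt A x y) = x"
  using lattice unfolding is_lattice_def by blast+

lemma ml_closed [simp]: "x \<in> car A \<Longrightarrow> y \<in> car A \<Longrightarrow> ml A x y \<in> car A"
  and ld_closed [simp]: "x \<in> car A \<Longrightarrow> y \<in> car A \<Longrightarrow> ld A x y \<in> car A"
  and rd_closed [simp]: "x \<in> car A \<Longrightarrow> y \<in> car A \<Longrightarrow> rd A x y \<in> car A"
  and un_closed [simp]: "un A \<in> car A"
  and ml_un_left: "x \<in> car A \<Longrightarrow> ml A (un A) x = x"
  and ml_un_right: "x \<in> car A \<Longrightarrow> ml A x (un A) = x"
  and ml_le_iff_le_ld: "x \<in> car A \<Longrightarrow> y \<in> car A \<Longrightarrow> z \<in> car A \<Longrightarrow>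
         leq A (ml A x y) z \<longleftrightarrow> leq A y (ld A x z)"
  and le_ld_iff_le_rd: "x \<in> car A \<Longrightarrow> y \<in> car A \<Longrightarrow> z \<in> car A \<Longrightarrow>
         leq A y (ld A x z) \<longleftrightarrow> leq A x (rd A z y)"
  using rlug unfolding is_rlug_def by blast+

lemma mt_idem: "x \<in> car A \<Longrightarrow> mt A x x = x"
  and jn_idem: "x \<in> car A \<Longrightarrow> jn A x x = x"
  by (metis mt_jn_absorb jn_mt_absorb mt_closed)+

lemma leq_refl: "x \<in> car A \<Longrightarrow> leq A x x"
  by (simp add: leq_def mt_idem)

lemma leq_antisym: "x \<in> car A \<Longrightarrow> y \<in> car A \<Longrightarrow> leq A x y \<Longrightarrow> leq A y x \<Longrightarrow> x = y"
  unfolding leq_def by (metis mt_commute)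

lemma leq_trans: "x \<in> car A \<Longrightarrow> y \<in> car A \<Longrightarrow> z \<in> car A \<Longrightarrow> leq A x y \<Longrightarrow> leq A y z \<Longrightarrow> leq A x z"
  unfolding leq_def by (metis mt_assoc)

lemma jn_eq_left_iff_leq: "x \<in> car A \<Longrightarrow> y \<in> car A \<Longrightarrow> jn A x y = x \<longleftrightarrow> leq A y x"
  unfolding leq_def by (metis mt_jn_absorb jn_mt_absorb jn_commute mt_commute)

lemma eq_if_same_lower_bounds:
  "x \<in> car A \<Longrightarrow> y \<in> car A \<Longrightarrow> (\<And>z. z \<in> car A \<Longrightarrow> leq A z x \<longleftrightarrow> leq A z y) \<Longrightarrow> x = y"
  by (metis leq_antisym leq_refl)

lemma ld_un_left: "x \<in> car A \<Longrightarrow> ld A (un A) x = x"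
  by (rule eq_if_same_lower_bounds) (auto simp: ml_le_iff_le_ld [symmetric] ml_un_left)

lemma rd_un_right: "x \<in> car A \<Longrightarrow> rd A x (un A) = x"
  by (rule eq_if_same_lower_bounds)
     (auto simp: ml_le_iff_le_ld [symmetric] le_ld_iff_le_rd [symmetric] ml_un_right)

lemma ld_eq_rd_if_commutative:
  assumes e: "satisfies A Eq_e" and x: "x \<in> car A" and y: "y \<in> car A"
  shows "ld A x y = rd A y x"
proof (rule eq_if_same_lower_bounds)
  fix z assume z: "z \<in> car A"
  have "leq A (ml A u v) (ml A v u)" if "u \<in> car A" "v \<in> car A" for u v
    using e that by (simp add: satisfies_def)
  then have "leq A (ml A x z) y \<longleftrightarrow> leq A (ml A z x) y"
    using x y z leq_trans by (meson ml_closed)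
  then show "leq A z (ld A x y) \<longleftrightarrow> leq A z (rd A y x)"
    using x y z by (metis ml_le_iff_le_ld le_ld_iff_le_rd)
qed (use x y in simp_all)

end

section \<open>The involutive extension\<close>

datatype 'a dbl = Bot | Low 'a | Mid | High 'a | Top

fun dbl_ok :: "('a, 'b) rlug_scheme \<Rightarrow> 'a dbl \<Rightarrow> bool" where
  "dbl_ok A (Low a) \<longleftrightarrow> a \<in> car A"
| "dbl_ok A (High a) \<longleftrightarrow> a \<in> car A"
| "dbl_ok A _ \<longleftrightarrow> True"

fun dbl_neg :: "'a dbl \<Rightarrow> 'a dbl" where
  "dbl_neg Bot = Top"
| "dbl_neg (Low a) = High a"
| "dbl_neg Mid = Mid"
| "dbl_neg (High a) = Low a"
| "dbl_neg Top = Bot"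

fun dbl_mt :: "('a, 'b) rlug_scheme \<Rightarrow> 'a dbl \<Rightarrow> 'a dbl \<Rightarrow> 'a dbl" where
  "dbl_mt A Bot y = Bot"
| "dbl_mt A x Bot = Bot"
| "dbl_mt A (Low a) (Low c) = Low (mt A a c)"
| "dbl_mt A (Low a) y = Low a"
| "dbl_mt A x (Low c) = Low c"
| "dbl_mt A Mid y = Mid"
| "dbl_mt A x Mid = Mid"
| "dbl_mt A (High b) (High d) = High (jn A b d)"
| "dbl_mt A (High b) Top = High b"
| "dbl_mt A Top (High d) = High d"
| "dbl_mt A Top Top = Top"

fun dbl_jn :: "('a, 'b) rlug_scheme \<Rightarrow> 'a dbl \<Rightarrow> 'a dbl \<Rightarrow> 'a dbl" where
  "dbl_jn A Top y = Top"
| "dbl_jn A x Top = Top"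
| "dbl_jn A (High b) (High d) = High (mt A b d)"
| "dbl_jn A (High b) y = High b"
| "dbl_jn A x (High d) = High d"
| "dbl_jn A Mid y = Mid"
| "dbl_jn A x Mid = Mid"
| "dbl_jn A (Low a) (Low c) = Low (jn A a c)"
| "dbl_jn A (Low a) Bot = Low a"
| "dbl_jn A Bot (Low c) = Low c"
| "dbl_jn A Bot Bot = Bot"

fun dbl_ml :: "('a, 'b) rlug_scheme \<Rightarrow> 'a dbl \<Rightarrow> 'a dbl \<Rightarrow> 'a dbl" where
  "dbl_ml A Bot y = Bot"
| "dbl_ml A x Bot = Bot"
| "dbl_ml A (Low a) (Low c) = Low (ml A a c)"
| "dbl_ml A (Low a) Mid = Mid"
| "dbl_ml A Mid (Low c) = Mid"
| "dbl_ml A Mid Mid = Mid"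
| "dbl_ml A (Low a) (High d) = High (rd A d a)"
| "dbl_ml A (High b) (Low c) = High (ld A c b)"
| "dbl_ml A x y = Top"

definition dbl_ld :: "('a, 'b) rlug_scheme \<Rightarrow> 'a dbl \<Rightarrow> 'a dbl \<Rightarrow> 'a dbl" where
  "dbl_ld A x z = dbl_neg (dbl_ml A (dbl_neg z) x)"

definition dbl_rd :: "('a, 'b) rlug_scheme \<Rightarrow> 'a dbl \<Rightarrow> 'a dbl \<Rightarrow> 'a dbl" where
  "dbl_rd A z y = dbl_neg (dbl_ml A y (dbl_neg z))"

definition dbl :: "('a, 'b) rlug_scheme \<Rightarrow> 'a dbl rluzg" where
  "dbl A = \<lparr>car = Collect (dbl_ok A), mt = dbl_mt A, jn = dbl_jn A, ml = dbl_ml A,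
     ld = dbl_ld A, rd = dbl_rd A, un = Low (un A), zr = High (un A)\<rparr>"

lemma dbl_simps [simp]:
  "car (dbl A) = Collect (dbl_ok A)" "mt (dbl A) = dbl_mt A" "jn (dbl A) = dbl_jn A"
  "ml (dbl A) = dbl_ml A" "ld (dbl A) = dbl_ld A" "rd (dbl A) = dbl_rd A"
  "un (dbl A) = Low (un A)" "zr (dbl A) = High (un A)"
  by (simp_all add: dbl_def)

lemma dbl_neg_neg [simp]: "dbl_neg (dbl_neg x) = x"
  by (cases x) auto

context rlug
begin

abbreviation dbl_le :: "'a dbl \<Rightarrow> 'a dbl \<Rightarrow> bool" where
  "dbl_le x y \<equiv> leq (dbl A) x y"

lemma dbl_le_simps [simp]:
  "dbl_le Bot y"
  "\<not> dbl_le (Low a) Bot"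
  "dbl_le (Low a) (Low c) \<longleftrightarrow> leq A a c"
  "dbl_le (Low a) Mid"
  "dbl_le (Low a) (High d)"
  "dbl_le (Low a) Top"
  "\<not> dbl_le Mid Bot"
  "\<not> dbl_le Mid (Low c)"
  "dbl_le Mid Mid"
  "dbl_le Mid (High d)"
  "dbl_le Mid Top"
  "\<not> dbl_le (High b) Bot"
  "\<not> dbl_le (High b) (Low c)"
  "\<not> dbl_le (High b) Mid"
  "dbl_le (High b) Top"
  "dbl_le Top y \<longleftrightarrow> y = Top"
  by (auto simp: leq_def elim: dbl_mt.elims)

lemma dbl_le_High_High [simp]:
  "b \<in> car A \<Longrightarrow> d \<in> car A \<Longrightarrow> dbl_le (High b) (High d) \<longleftrightarrow> leq A d b"
  by (simp add: leq_def jn_eq_left_iff_leq)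

lemma dbl_ok_closed [simp]:
  "dbl_ok A x \<Longrightarrow> dbl_ok A y \<Longrightarrow> dbl_ok A (dbl_mt A x y)"
  "dbl_ok A x \<Longrightarrow> dbl_ok A y \<Longrightarrow> dbl_ok A (dbl_jn A x y)"
  "dbl_ok A x \<Longrightarrow> dbl_ok A y \<Longrightarrow> dbl_ok A (dbl_ml A x y)"
  "dbl_ok A x \<Longrightarrow> dbl_ok A (dbl_neg x)"
  by (cases x; cases y; simp)+

lemma dbl_ok_ld_rd [simp]:
  "dbl_ok A x \<Longrightarrow> dbl_ok A y \<Longrightarrow> dbl_ok A (dbl_ld A x y)"
  "dbl_ok A x \<Longrightarrow> dbl_ok A y \<Longrightarrow> dbl_ok A (dbl_rd A x y)"
  by (simp_all add: dbl_ld_def dbl_rd_def)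

lemma dbl_le_neg_rotate:
  "dbl_ok A x \<Longrightarrow> dbl_ok A y \<Longrightarrow> dbl_ok A w \<Longrightarrow>
     dbl_le (dbl_ml A x y) (dbl_neg w) \<longleftrightarrow> dbl_le (dbl_ml A w x) (dbl_neg y)"
  by (cases x; cases y; cases w) (auto simp: ml_le_iff_le_ld le_ld_iff_le_rd)

lemma dbl_le_neg_swap:
  "dbl_ok A x \<Longrightarrow> dbl_ok A y \<Longrightarrow> dbl_le x (dbl_neg y) \<longleftrightarrow> dbl_le y (dbl_neg x)"
  by (cases x; cases y) auto

lemma dbl_ml_un_left: "dbl_ok A x \<Longrightarrow> dbl_ml A (Low (un A)) x = x"
  and dbl_ml_un_right: "dbl_ok A x \<Longrightarrow> dbl_ml A x (Low (un A)) = x"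
  by (cases x; simp add: ml_un_left ml_un_right ld_un_left rd_un_right)+

lemma dbl_mt_commute: "dbl_ok A x \<Longrightarrow> dbl_ok A y \<Longrightarrow> dbl_mt A x y = dbl_mt A y x"
  and dbl_jn_commute: "dbl_ok A x \<Longrightarrow> dbl_ok A y \<Longrightarrow> dbl_jn A x y = dbl_jn A y x"
  and dbl_mt_jn_absorb: "dbl_ok A x \<Longrightarrow> dbl_ok A y \<Longrightarrow> dbl_mt A x (dbl_jn A x y) = x"
  and dbl_jn_mt_absorb: "dbl_ok A x \<Longrightarrow> dbl_ok A y \<Longrightarrow> dbl_jn A x (dbl_mt A x y) = x"
  by (cases x; cases y; simp add: mt_commute jn_commute mt_jn_absorb jn_mt_absorb mt_idem jn_idem)+

lemma dbl_mt_assoc: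
    "dbl_ok A x \<Longrightarrow> dbl_ok A y \<Longrightarrow> dbl_ok A z \<Longrightarrow> dbl_mt A x (dbl_mt A y z) = dbl_mt A (dbl_mt A x y) z"
  and dbl_jn_assoc:
    "dbl_ok A x \<Longrightarrow> dbl_ok A y \<Longrightarrow> dbl_ok A z \<Longrightarrow> dbl_jn A x (dbl_jn A y z) = dbl_jn A (dbl_jn A x y) z"
  by (cases x; cases y; cases z; simp add: mt_assoc jn_assoc)+

lemma dbl_le_ml_iff_le_ld:
    "dbl_ok A x \<Longrightarrow> dbl_ok A y \<Longrightarrow> dbl_ok A z \<Longrightarrow>
       dbl_le (dbl_ml A x y) z \<longleftrightarrow> dbl_le y (dbl_ld A x z)"
  and dbl_le_ld_iff_le_rd:
    "dbl_ok A x \<Longrightarrow> dbl_ok A y \<Longrightarrow> dbl_ok A z \<Longrightarrow>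
       dbl_le y (dbl_ld A x z) \<longleftrightarrow> dbl_le x (dbl_rd A z y)"
proof -
  assume "dbl_ok A x" "dbl_ok A y" "dbl_ok A z"
  then show "dbl_le (dbl_ml A x y) z \<longleftrightarrow> dbl_le y (dbl_ld A x z)"
    using dbl_le_neg_rotate [of x y "dbl_neg z"] dbl_le_neg_swap [of y "dbl_ml A (dbl_neg z) x"]
    by (simp add: dbl_ld_def)
next
  assume "dbl_ok A x" "dbl_ok A y" "dbl_ok A z"
  then show "dbl_le y (dbl_ld A x z) \<longleftrightarrow> dbl_le x (dbl_rd A z y)"
    using dbl_le_neg_rotate [of "dbl_neg z" x y] dbl_le_neg_swap [of y "dbl_ml A (dbl_neg z) x"]
      dbl_le_neg_swap [of x "dbl_ml A y (dbl_neg z)"]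
    by (simp add: dbl_ld_def dbl_rd_def)
qed

lemma is_rlug_dbl: "is_rlug (dbl A)"
  unfolding is_rlug_def is_lattice_def
  by (auto simp: dbl_mt_assoc dbl_jn_assoc dbl_mt_jn_absorb dbl_jn_mt_absorb dbl_ml_un_left
      dbl_ml_un_right dbl_le_ml_iff_le_ld dbl_le_ld_iff_le_rd intro: dbl_mt_commute dbl_jn_commute)

lemma is_cyclic_involutive_dbl: "is_cyclic_involutive (dbl A)"
proof -
  have "lneg (dbl A) x = dbl_neg x" "rneg (dbl A) x = dbl_neg x" if "dbl_ok A x" for x
    using that by (simp_all add: lneg_def rneg_def dbl_ld_def dbl_rd_def
                                dbl_ml_un_left dbl_ml_un_right)
  then show ?thesis
    using is_rlug_dbl
    unfolding is_cyclic_involutive_def is_involutive_def is_rluzg_def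
    by (simp add: dbl_ld_def dbl_rd_def)
qed

lemma satisfies_dbl:
  assumes "satisfies A r"
  shows "satisfies (dbl A) r"
proof (cases r)
  case Eq_e
  with assms have e: "satisfies A Eq_e" by simp
  then have "leq A (ml A a c) (ml A c a)" if "a \<in> car A" "c \<in> car A" for a c
    using that by (simp add: satisfies_def)
  with e have "dbl_le (dbl_ml A x y) (dbl_ml A y x)" if "dbl_ok A x" "dbl_ok A y" for x y
    using that by (cases x; cases y) (auto simp: ld_eq_rd_if_commutative leq_refl)
  with Eq_e show ?thesis by (auto simp: satisfies_def)
next
  case Eq_c
  with assms have "satisfies A Eq_c" by simp
  then have "dbl_le x (dbl_ml A x x)" if "dbl_ok A x" for x
    using that by (cases x) (auto simp: satisfies_def)
  with Eq_c show ?thesis by (auto simp: satisfies_def)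
qed

end

lemma embeds_into_reduct_dbl:
  fixes A :: "'a rlug"
  shows "embeds_into_reduct A (dbl A)"
  unfolding embeds_into_reduct_def
  by (rule exI [of _ Low]) (auto simp: inj_on_def dbl_ld_def dbl_rd_def)

definition transport :: "('b \<Rightarrow> 'c) \<Rightarrow> 'b rluzg \<Rightarrow> 'c rluzg" where
  "transport f B = \<lparr>car = f ` car B,
     mt = \<lambda>X Y. f (mt B (inv f X) (inv f Y)), jn = \<lambda>X Y. f (jn B (inv f X) (inv f Y)),
     ml = \<lambda>X Y. f (ml B (inv f X) (inv f Y)), ld = \<lambda>X Y. f (ld B (inv f X) (inv f Y)),
     rd = \<lambda>X Y. f (rd B (inv f X) (inv f Y)), un = f (un B), zr = f (zr B)\<rparr>"

context
  fixes f :: "'b \<Rightarrow> 'c" and B :: "'b rluzg"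
  assumes inj: "inj f"
begin

lemma transport_simps [simp]:
  "car (transport f B) = f ` car B"
  "mt (transport f B) (f x) (f y) = f (mt B x y)"
  "jn (transport f B) (f x) (f y) = f (jn B x y)"
  "ml (transport f B) (f x) (f y) = f (ml B x y)"
  "ld (transport f B) (f x) (f y) = f (ld B x y)"
  "rd (transport f B) (f x) (f y) = f (rd B x y)"
  "un (transport f B) = f (un B)"
  "zr (transport f B) = f (zr B)"
  by (simp_all add: transport_def inj)

lemma leq_transport [simp]: "leq (transport f B) (f x) (f y) \<longleftrightarrow> leq B x y"
  by (simp add: leq_def inj inj_eq)

lemma lneg_transport [simp]: "lneg (transport f B) (f x) = f (lneg B x)"
  and rneg_transport [simp]: "rneg (transport f B) (f x) = f (rneg B x)"
  by (simp_all add: lneg_def rneg_def)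

lemma is_rlug_transport_iff: "is_rlug (transport f B) \<longleftrightarrow> is_rlug B"
  unfolding is_rlug_def is_lattice_def by (simp add: inj_image_mem_iff [OF inj] inj_eq [OF inj])

lemma is_cyclic_involutive_transport_iff:
  "is_cyclic_involutive (transport f B) \<longleftrightarrow> is_cyclic_involutive B"
  unfolding is_cyclic_involutive_def is_involutive_def is_rluzg_def
  by (simp add: is_rlug_transport_iff inj_image_mem_iff [OF inj] inj_eq [OF inj])

lemma satisfies_transport_iff: "satisfies (transport f B) r \<longleftrightarrow> satisfies B r"
  by (cases r) (simp_all add: satisfies_def)

lemma embeds_into_reduct_transport:
  assumes "embeds_into_reduct A B"
  shows "embeds_into_reduct A (transport f B)"
proof -
  obtain h where h: "inj_on h (car A)" "h ` car A \<subseteq> car B" "h (un A) = un B"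
    "\<forall>x\<in>car A. \<forall>y\<in>car A.
        h (mt A x y) = mt B (h x) (h y) \<and> h (jn A x y) = jn B (h x) (h y) \<and>
        h (ml A x y) = ml B (h x) (h y) \<and> h (ld A x y) = ld B (h x) (h y) \<and>
        h (rd A x y) = rd B (h x) (h y)"
    using assms unfolding embeds_into_reduct_def by blast
  have "inj_on (f \<circ> h) (car A)"
    using h(1) inj by (simp add: comp_inj_on inj_on_subset)
  with h show ?thesis
    unfolding embeds_into_reduct_def by (intro exI [of _ "f \<circ> h"]) auto
qed

end

text \<open>The carrier type of the theorem only has to receive an injective copy of \<open>'a dbl\<close>.\<close>

fun dbl_code :: "'a dbl \<Rightarrow> ('a + nat) list set set" where
  "dbl_code Bot = {}"
| "dbl_code (Low a) = {{[Inl a]}}"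
| "dbl_code Mid = {{}}"
| "dbl_code (High a) = {{[Inl a], []}}"
| "dbl_code Top = {{[]}}"

lemma inj_dbl_code: "inj dbl_code"
proof (rule injI)
  fix x y :: "'a dbl"
  show "dbl_code x = dbl_code y \<Longrightarrow> x = y"
    by (cases x; cases y) (auto simp: doubleton_eq_iff)
qed

theorem mainTheorem12:
  fixes R :: "eqn set" and A :: "'a rlug"
  assumes "R \<subseteq> {Eq_e, Eq_c}"
    and "in_RLUG R A"
  shows "\<exists>B :: (('a + nat) list set set) rluzg. in_CyInRLUG R B \<and> embeds_into_reduct A B"
proof -
  \<comment> \<open>The hypothesis on \<open>R\<close> is vacuous: \<open>eqn\<close> has no other constructors.\<close>
  from assms(2) have A: "rlug A" and sat: "\<forall>r\<in>R. satisfies A r"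
    by (simp_all add: in_RLUG_def rlug_def)
  let ?B = "transport dbl_code (dbl A)"
  have "is_cyclic_involutive ?B"
    unfolding is_cyclic_involutive_transport_iff [OF inj_dbl_code]
    by (rule rlug.is_cyclic_involutive_dbl [OF A])
  moreover have "\<forall>r\<in>R. satisfies ?B r"
    unfolding satisfies_transport_iff [OF inj_dbl_code]
    using sat by (blast intro: rlug.satisfies_dbl [OF A])
  moreover have "embeds_into_reduct A ?B"
    by (rule embeds_into_reduct_transport [OF inj_dbl_code embeds_into_reduct_dbl])
  ultimately show ?thesis
    by (auto simp: in_CyInRLUG_def)
qed

end
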